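(* For all states $s, s'$: if $s$ is consistent and $s \rightsquigarrow s'$, then $s'$ is consistent.
   Context: Findel execution model. Addresses, times, identifiers and amounts are natural numbers; address $0$ is the default address. Currencies form the finite set $\{\mathtt{USD},\mathtt{EUR},\mathtt{GBP},\mathtt{JPY},\mathtt{CNY},\mathtt{SGD},\mathtt{NONE}\}$. Primitives are the terms generated by: $\mathtt{Zero}$; $\mathtt{One}(cur)$; $\mathtt{Scale}(m,P)$ with $m\in\mathbb N$; $\mathtt{ScaleObs}(a,P)$ with $a$ an address; $\mathtt{Give}(P)$; $\mathtt{And}(P_1,P_2)$; $\mathtt{Or}(P_1,P_2)$; $\mathtt{If}(a,P_1,P_2)$; $\mathtt{Timebound}(t_0,t_1,P)$ with $t_0,t_1\in\mathbb N$. A transaction is a tuple $(\mathit{id},\mathit{ctr\_id},\mathit{from},\mathit{to},\mathit{amount},\mathit{currency},\mathit{timestamp})$. A contract $c$ is a record with fields $id(c)$, $dsc(c)$ (a description id), $prim(c)$ (a primitive), $issuer(c)$, $owner(c)$, $po(c)$ (proposed owner), $sc(c)\in\mathbb N$ (scale). A description $d$ has fields $id(d)$, $prim(d)$, $sc(d)$, $vfrom(d)$, $vuntil(d)$. A gateway list is a list of (address, value, timestamp) triples, and $\mathrm{query}(G,a,\tau)\in\mathbb N\cup\{\mathrm{None}\}$ is a fixed function. A balance maps (address, currency) pairs to integers. The function $\mathrm{execute}(P,k,I,O,B,\tau,G,cid,did,n,L)$ returns either $\mathrm{None}$ or a result $(B',C',n',L')$ (new balance, list of generated contracts, next fresh id,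 ledger); it is defined by recursion on $P$: - $\mathtt{Zero}$: $(B,[\,],n,L)$. - $\mathtt{One}(cur)$: $(B_1,[\,],n+1,(n,cid,I,O,k,cur,\tau)::L)$ where $B_1$ is $B$ with $B(I,cur)$ decreased by $k$ and then $B(O,cur)$ increased by $k$. - $\mathtt{Scale}(m,P')$: $\mathrm{execute}(P',k\cdot m,I,O,B,\tau,G,cid,did,n,L)$. - $\mathtt{ScaleObs}(a,P')$: $\mathrm{None}$ if $\mathrm{query}(G,a,\tau)=\mathrm{None}$; if it equals $r$, $\mathrm{execute}(P',k\cdot r,I,O,\dots)$ with the other arguments unchanged. - $\mathtt{Give}(P')$: $\mathrm{execute}(P',k,O,I,B,\tau,G,cid,did,n,L)$ (issuer and owner swapped). - $\mathtt{And}(P_1,P_2)$: execute $P_1$; if $\mathrm{None}$, return $\mathrm{None}$; if $(B_1,C_1,n_1,L_1)$, execute $P_2$ with balance $B_1$, fresh id $n_1$, ledger $L_1$ (other arguments unchanged); if $\mathrm{None}$ return $\mathrm{None}$, if $(B_2,C_2,n_2,L_2)$ return $(B_2,C_1{+\!\!+}C_2,n_2,L_2)$. - $\mathtt{If}(a,P_1,P_2)$: $\mathrm{None}$ if the query of $a$ is $\mathrm{None}$; if the value is $0$ execute $P_2$, otherwise execute $P_1$ (same arguments). - $\mathtt{Timebound}(t_0,t_1,P')$: if $t_1<\tau$ return $\mathrm{None}$; else if $t_0<\tau$ execute $P'$ with the same arguments; else return $(B,[c'],n+2,L)$ where $c'$ has id $n+1$, description id $did$, primitive $\mathtt{Timebound}(t_0,t_1,P')$,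 issuer $I$, owner $O$, proposed owner $O$, scale $k$. - $\mathtt{Or}(P_1,P_2)$: return $(B,[c'],n+2,L)$ where $c'$ has id $n+1$, description id $did$, primitive $\mathtt{Or}(P_1,P_2)$, issuer $I$, owner $O$, proposed owner $O$, scale $k$. A state $s$ consists of a list of contracts $\mathcal C(s)$, a list of descriptions $\mathcal D(s)$, a balance $\mathcal B(s)$, a time $time(s)$, a gateway list $\mathcal G(s)$, a fresh id $fresh(s)$, a ledger (list of transactions) $\mathcal L(s)$, and a list of events $\mathtt E(s)$, events being $\mathtt{IssuedFor}(O,i)$, $\mathtt{Executed}(i)$, $\mathtt{Deleted}(i)$. The step relation $s\curvearrowright s'$ holds iff one of the following applies: [Issue] for some $d\in\mathcal D(s)$ and addresses $I,O$: $s'$ equals $s$ except $\mathcal C(s')=c::\mathcal C(s)$ with $c=(id=fresh(s),dsc=id(d),prim=prim(d),issuer=I,owner=I,po=O,sc=sc(d))$, $fresh(s')=fresh(s)+1$, $\mathtt E(s')=\mathtt{IssuedFor}(O,fresh(s))::\mathtt E(s)$. For the remaining execution rules, take $c\in\mathcal C(s)$ and an address $O$ (the joiner) with (A) $po(c)=O$ or $po(c)=0$, and (C) some $d\in\mathcal D(s)$ with $id(d)=dsc(c)$ and $vfrom(d)\le time(s)\le vuntil(d)$; write $X(Q)=\mathrm{execute}(Q,sc(c),issuer(c),O,\mathcal B(s),time(s),\mathcal G(s),id(c),dsc(c),fresh(s),\mathcal L(s))$. [Join] $prim(c)$ is not of the form $\mathtt{Or}(\_,\_)$ and $X(prim(c))=(B',C',n',L')$: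 $s'$ has contracts $\mathcal C(s)$ with $c$ removed, followed by $C'$; balance $B'$; fresh id $n'$; ledger $L'$; events $\mathtt{Executed}(id(c))::\mathtt E(s)$; other components unchanged. [Join Or] $prim(c)=\mathtt{Or}(P_1,P_2)$ and for some $Q\in\{P_1,P_2\}$, $X(Q)=(B',C',n',L')$: same update as [Join]. [Fail] $X(Q)=\mathrm{None}$, where $Q=prim(c)$ if $prim(c)$ is not an $\mathtt{Or}$, and $Q\in\{P_1,P_2\}$ if $prim(c)=\mathtt{Or}(P_1,P_2)$: $s'$ equals $s$ except $c$ is removed from the contracts and $\mathtt E(s')=\mathtt{Deleted}(id(c))::\mathtt E(s)$. [Tick] $s'$ equals $s$ except $time(s')=time(s)+1$. $\rightsquigarrow$ is the reflexive–transitive closure of $\curvearrowright$. A state $s$ is consistent if: (1) $fresh(s)>id(c)$ for all $c\in\mathcal C(s)$; (2) $fresh(s)>i$ whenever $\mathtt{Executed}(i)\in\mathtt E(s)$ or $\mathtt{Deleted}(i)\in\mathtt E(s)$; (3) for all $c\in\mathcal C(s)$, $\mathtt{Executed}(id(c))\notin\mathtt E(s)$ and $\mathtt{Deleted}(id(c))\notin\mathtt E(s)$; (4) for no $i$ are both $\mathtt{Executed}(i)$ and $\mathtt{Deleted}(i)$ in $\mathtt E(s)$. *)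

theory Defs
  imports Main
begin

type_synonym address = nat
type_synonym time = nat

datatype currency = USD | EUR | GBP | JPY | CNY | SGD | NONE

datatype primitive =
    Zero
  | One currency
  | Scale nat primitive
  | ScaleObs address primitive
  | Give primitive
  | And primitive primitive
  | Or primitive primitive
  | If address primitive primitive
  | Timebound time time primitive

record transaction =
  tr_id :: nat
  tr_ctr_id :: nat
  tr_from :: address
  tr_to :: address
  tr_amount :: nat
  tr_currency :: currency
  tr_timestamp :: time

record contract =
  ctr_id :: nat
  ctr_dsc :: nat
  ctr_prim :: primitive
  ctr_issuer :: address
  ctr_owner :: address
  ctr_po :: address
  ctr_sc :: nat

record description =
  dsc_id :: nat
  dsc_prim :: primitive
  dsc_sc :: nat
  dsc_vfrom :: time
  dsc_vuntil :: time

type_synonym gateway = "(address \<times> nat \<times> time) list"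

(* the fixed query function is kept as an arbitrary parameter *)
type_synonym query_fun = "gateway \<Rightarrow> address \<Rightarrow> time \<Rightarrow> nat option"

type_synonym balance = "address \<times> currency \<Rightarrow> int"

type_synonym result = "balance \<times> contract list \<times> nat \<times> transaction list"

definition transfer :: "balance \<Rightarrow> address \<Rightarrow> address \<Rightarrow> currency \<Rightarrow> nat \<Rightarrow> balance" where
  "transfer B I Ow cur k =
     (let B0 = B((I, cur) := B (I, cur) - int k) in B0((Ow, cur) := B0 (Ow, cur) + int k))"

definition mk_contract :: "nat \<Rightarrow> nat \<Rightarrow> primitive \<Rightarrow> address \<Rightarrow> address \<Rightarrow> address \<Rightarrow> nat \<Rightarrow> contract" where
  "mk_contract i d p iss own po sc =
     \<lparr>ctr_id = i, ctr_dsc = d, ctr_prim = p, ctr_issuer = iss, ctr_owner = own, ctr_po = po, ctr_sc = sc\<rparr>"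

fun execute :: "query_fun \<Rightarrow> primitive \<Rightarrow> nat \<Rightarrow> address \<Rightarrow> address \<Rightarrow> balance \<Rightarrow> time \<Rightarrow> gateway
                 \<Rightarrow> nat \<Rightarrow> nat \<Rightarrow> nat \<Rightarrow> transaction list \<Rightarrow> result option" where
  "execute q Zero k I Ow B \<tau> G cid did n L = Some (B, [], n, L)"
| "execute q (One cur) k I Ow B \<tau> G cid did n L =
     Some (transfer B I Ow cur k, [], n + 1,
           \<lparr>tr_id = n, tr_ctr_id = cid, tr_from = I, tr_to = Ow, tr_amount = k,
            tr_currency = cur, tr_timestamp = \<tau>\<rparr> # L)"
| "execute q (Scale m P) k I Ow B \<tau> G cid did n L = execute q P (k * m) I Ow B \<tau> G cid did n L"
| "execute q (ScaleObs a P) k I Ow B \<tau> G cid did n L =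
     (case q G a \<tau> of None \<Rightarrow> None
      | Some r \<Rightarrow> execute q P (k * r) I Ow B \<tau> G cid did n L)"
| "execute q (Give P) k I Ow B \<tau> G cid did n L = execute q P k Ow I B \<tau> G cid did n L"
| "execute q (And P1 P2) k I Ow B \<tau> G cid did n L =
     (case execute q P1 k I Ow B \<tau> G cid did n L of None \<Rightarrow> None
      | Some (B1, C1, n1, L1) \<Rightarrow>
          (case execute q P2 k I Ow B1 \<tau> G cid did n1 L1 of None \<Rightarrow> None
           | Some (B2, C2, n2, L2) \<Rightarrow> Some (B2, C1 @ C2, n2, L2)))"
| "execute q (If a P1 P2) k I Ow B \<tau> G cid did n L =
     (case q G a \<tau> of None \<Rightarrow> None
      | Some v \<Rightarrow> (if v = 0 then execute q P2 k I Ow B \<tau> G cid did n L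
                   else execute q P1 k I Ow B \<tau> G cid did n L))"
| "execute q (Timebound t0 t1 P) k I Ow B \<tau> G cid did n L =
     (if t1 < \<tau> then None
      else if t0 < \<tau> then execute q P k I Ow B \<tau> G cid did n L
      else Some (B, [mk_contract (n + 1) did (Timebound t0 t1 P) I Ow Ow k], n + 2, L))"
| "execute q (Or P1 P2) k I Ow B \<tau> G cid did n L =
     Some (B, [mk_contract (n + 1) did (Or P1 P2) I Ow Ow k], n + 2, L)"

datatype event = IssuedFor address nat | Executed nat | Deleted nat

record state =
  st_contracts :: "contract list"
  st_descs :: "description list"
  st_balance :: balance
  st_time :: time
  st_gateway :: gateway
  st_fresh :: nat
  st_ledger :: "transaction list"
  st_events :: "event list"

fun is_Or :: "primitive \<Rightarrow> bool" where
  "is_Or (Or _ _) = True"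
| "is_Or _ = False"

definition exec_in :: "query_fun \<Rightarrow> state \<Rightarrow> contract \<Rightarrow> address \<Rightarrow> primitive \<Rightarrow> result option" where
  "exec_in q s c Ow Q =
     execute q Q (ctr_sc c) (ctr_issuer c) Ow (st_balance s) (st_time s) (st_gateway s)
             (ctr_id c) (ctr_dsc c) (st_fresh s) (st_ledger s)"

definition remove_ctr :: "contract \<Rightarrow> contract list \<Rightarrow> contract list" where
  "remove_ctr c cs = filter (\<lambda>x. ctr_id x \<noteq> ctr_id c) cs"

definition exec_ok :: "state \<Rightarrow> contract \<Rightarrow> address \<Rightarrow> bool" where
  "exec_ok s c Ow \<longleftrightarrow> c \<in> set (st_contracts s) \<and> (ctr_po c = Ow \<or> ctr_po c = 0) \<and>
     (\<exists>d \<in> set (st_descs s). dsc_id d = ctr_dsc c \<and> dsc_vfrom d \<le> st_time s \<and> st_time s \<le> dsc_vuntil d)"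

definition exec_choice :: "contract \<Rightarrow> primitive \<Rightarrow> bool" where
  "exec_choice c Q \<longleftrightarrow>
     (case ctr_prim c of Or P1 P2 \<Rightarrow> Q = P1 \<or> Q = P2 | _ \<Rightarrow> Q = ctr_prim c)"

inductive step :: "query_fun \<Rightarrow> state \<Rightarrow> state \<Rightarrow> bool" for q where
  Issue: "d \<in> set (st_descs s) \<Longrightarrow>
    s' = s\<lparr>st_contracts := mk_contract (st_fresh s) (dsc_id d) (dsc_prim d) I I Ow (dsc_sc d) # st_contracts s,
           st_fresh := st_fresh s + 1,
           st_events := IssuedFor Ow (st_fresh s) # st_events s\<rparr> \<Longrightarrow>
    step q s s'"
| Join: "exec_ok s c Ow \<Longrightarrow> \<not> is_Or (ctr_prim c) \<Longrightarrow>
    exec_in q s c Ow (ctr_prim c) = Some (B', C', n', L') \<Longrightarrow>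
    s' = s\<lparr>st_contracts := remove_ctr c (st_contracts s) @ C', st_balance := B',
           st_fresh := n', st_ledger := L', st_events := Executed (ctr_id c) # st_events s\<rparr> \<Longrightarrow>
    step q s s'"
| JoinOr: "exec_ok s c Ow \<Longrightarrow> ctr_prim c = Or P1 P2 \<Longrightarrow> Q \<in> {P1, P2} \<Longrightarrow>
    exec_in q s c Ow Q = Some (B', C', n', L') \<Longrightarrow>
    s' = s\<lparr>st_contracts := remove_ctr c (st_contracts s) @ C', st_balance := B',
           st_fresh := n', st_ledger := L', st_events := Executed (ctr_id c) # st_events s\<rparr> \<Longrightarrow>
    step q s s'"
| Fail: "exec_ok s c Ow \<Longrightarrow> exec_choice c Q \<Longrightarrow> exec_in q s c Ow Q = None \<Longrightarrow>
    s' = s\<lparr>st_contracts := remove_ctr c (st_contracts s),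
           st_events := Deleted (ctr_id c) # st_events s\<rparr> \<Longrightarrow>
    step q s s'"
| Tick: "s' = s\<lparr>st_time := st_time s + 1\<rparr> \<Longrightarrow> step q s s'"

abbreviation steps :: "query_fun \<Rightarrow> state \<Rightarrow> state \<Rightarrow> bool" where
  "steps q \<equiv> (step q)\<^sup>*\<^sup>*"

definition consistent :: "state \<Rightarrow> bool" where
  "consistent s \<longleftrightarrow>
     (\<forall>c \<in> set (st_contracts s). st_fresh s > ctr_id c) \<and>
     (\<forall>i. (Executed i \<in> set (st_events s) \<or> Deleted i \<in> set (st_events s)) \<longrightarrow> st_fresh s > i) \<and>
     (\<forall>c \<in> set (st_contracts s). Executed (ctr_id c) \<notin> set (st_events s) \<and> Deleted (ctr_id c) \<notin> set (st_events s)) \<and>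
     (\<nexists>i. Executed i \<in> set (st_events s) \<and> Deleted i \<in> set (st_events s))"

end

theory Submission
  imports Defs
begin

text \<open>Consistency is an invariant because identifiers are handed out monotonically:
every contract created during an execution gets an identifier strictly between the
old and the new fresh counter, hence above every identifier already mentioned in the
state, while the executed or deleted contract is removed together with the one event
recording its fate.\<close>

lemma execute_new_contract_ids:
  assumes "execute q P k I Ow B \<tau> G cid did n L = Some (B', C', n', L')"
  shows "n \<le> n' \<and> (\<forall>c\<in>set C'. n < ctr_id c \<and> ctr_id c < n')"
  using assms
proof (induction P arbitrary: k I Ow B n L B' C' n' L')
  case (And P1 P2)
  obtain B1 C1 n1 L1 where P1: "execute q P1 k I Ow B \<tau> G cid did n L = Some (B1, C1, n1, L1)"
    using And.prems by (auto split: option.splits)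
  obtain C2 where P2: "execute q P2 k I Ow B1 \<tau> G cid did n1 L1 = Some (B', C2, n', L')"
    and "C' = C1 @ C2"
    using And.prems P1 by (auto split: option.splits)
  then show ?case using And.IH(1)[OF P1] And.IH(2)[OF P2] by fastforce
qed (auto simp: mk_contract_def split: option.splits if_splits)

lemma consistent_retire_contract:
  assumes "consistent s" and "c \<in> set (st_contracts s)"
    and "st_fresh s \<le> st_fresh s'"
    and "st_contracts s' = remove_ctr c (st_contracts s) @ C'"
    and "\<forall>x\<in>set C'. st_fresh s < ctr_id x \<and> ctr_id x < st_fresh s'"
    and "st_events s' = e # st_events s"
    and "e = Executed (ctr_id c) \<or> e = Deleted (ctr_id c)"
  shows "consistent s'"
proof -
  have fresh: "\<forall>x\<in>set (st_contracts s). ctr_id x < st_fresh s"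
    and events: "\<forall>i. Executed i \<in> set (st_events s) \<or> Deleted i \<in> set (st_events s) \<longrightarrow> i < st_fresh s"
    and alive: "\<forall>x\<in>set (st_contracts s).
                  Executed (ctr_id x) \<notin> set (st_events s) \<and> Deleted (ctr_id x) \<notin> set (st_events s)"
    and unique: "\<nexists>i. Executed i \<in> set (st_events s) \<and> Deleted i \<in> set (st_events s)"
    using assms(1) unfolding consistent_def by blast+
  have c_fresh: "ctr_id c < st_fresh s" and c_alive:
    "Executed (ctr_id c) \<notin> set (st_events s)" "Deleted (ctr_id c) \<notin> set (st_events s)"
    using fresh alive assms(2) by blast+
  have new_unmentioned: "Executed (ctr_id x) \<notin> set (st_events s')"
    "Deleted (ctr_id x) \<notin> set (st_events s')" if "x \<in> set C'" for x
    using that assms(5-7) events c_fresh by fastforce+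
  show ?thesis
    unfolding consistent_def
  proof (intro conjI)
    show "\<forall>x\<in>set (st_contracts s'). ctr_id x < st_fresh s'"
      using assms(3-5) fresh by (fastforce simp: remove_ctr_def)
    show "\<forall>i. Executed i \<in> set (st_events s') \<or> Deleted i \<in> set (st_events s') \<longrightarrow> i < st_fresh s'"
      using assms(3,6,7) events c_fresh by fastforce
    show "\<forall>x\<in>set (st_contracts s').
            Executed (ctr_id x) \<notin> set (st_events s') \<and> Deleted (ctr_id x) \<notin> set (st_events s')"
      using assms(4,6,7) alive new_unmentioned by (auto simp: remove_ctr_def)
    show "\<nexists>i. Executed i \<in> set (st_events s') \<and> Deleted i \<in> set (st_events s')"
      using assms(6,7) unique c_alive by auto
  qed
qed

lemma consistent_after_join:
  assumes "consistent s" and "exec_ok s c Ow" and "exec_in q s c Ow Q = Some (B', C', n', L')"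
  shows "consistent (s\<lparr>st_contracts := remove_ctr c (st_contracts s) @ C', st_balance := B',
           st_fresh := n', st_ledger := L', st_events := Executed (ctr_id c) # st_events s\<rparr>)"
proof -
  have "st_fresh s \<le> n' \<and> (\<forall>x\<in>set C'. st_fresh s < ctr_id x \<and> ctr_id x < n')"
    using assms(3) unfolding exec_in_def by (rule execute_new_contract_ids)
  moreover have "c \<in> set (st_contracts s)"
    using assms(2) by (simp add: exec_ok_def)
  ultimately show ?thesis
    by (intro consistent_retire_contract[OF assms(1), where e = "Executed (ctr_id c)"]) auto
qed

lemma step_preserves_consistent:
  assumes "step q s s'" and "consistent s"
  shows "consistent s'"
  using assms(1)
proof cases
  case (Issue d I Ow)
  then show ?thesis
    using assms(2) unfolding consistent_def by (auto simp: mk_contract_def)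
next
  case Join
  then show ?thesis
    using assms(2) consistent_after_join by blast
next
  case JoinOr
  then show ?thesis
    using assms(2) consistent_after_join by blast
next
  case (Fail c Ow Q)
  have "c \<in> set (st_contracts s)"
    using Fail(1) by (simp add: exec_ok_def)
  then show ?thesis
    using Fail(4) by (intro consistent_retire_contract[OF assms(2), where C' = "[]" and e = "Deleted (ctr_id c)"]) auto
next
  case Tick
  then show ?thesis
    using assms(2) by (simp add: consistent_def)
qed

theorem theorem1:
  fixes q :: query_fun and s s' :: state
  assumes "consistent s" and "steps q s s'"
  shows "consistent s'"
  using assms(2,1)
  by (induction rule: rtranclp_induct) (auto intro: step_preserves_consistent)

end
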